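(* Let $\Gamma$ be a finite abelian group of order $n \ge 3$ and let $G = \mathrm{Cay}(\Gamma, S)$ be a Cayley graph on $\Gamma$. Then $\frac{\lambda_3(G)}{n} \le \frac13$.
   Context: For a group $\Gamma$ with identity $e$ and a subset $S \subseteq \Gamma$ with $e \notin S$ and $S = S^{-1}$, the Cayley graph $\mathrm{Cay}(\Gamma,S)$ has vertex set $\Gamma$, with $s_1 \sim s_2$ if and only if $s_1 s_2^{-1} \in S$. $\lambda_3$ denotes the third largest eigenvalue (with multiplicity) of the adjacency matrix. *)

theory Defs
  imports "Jordan_Normal_Form.Char_Poly" "HOL-Library.Multiset" "HOL-Library.Cardinality"
begin

definition elem_enum :: "nat \<Rightarrow> 'a::finite" where
  "elem_enum = (SOME f. bij_betw f {..<CARD('a)} (UNIV :: 'a set))"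

text \<open>Adjacency matrix of the Cayley graph Cay(Gamma,S) on an (additively written)
  group Gamma: s1 ~ s2 iff s1 s2^{-1} \<in> S, i.e. s1 - s2 \<in> S.\<close>
definition cayley_adj :: "'a::{group_add,finite} set \<Rightarrow> real mat" where
  "cayley_adj S = mat CARD('a) CARD('a)
     (\<lambda>(i,j). if elem_enum i - elem_enum j \<in> S then 1 else 0)"

definition eig_mset :: "real mat \<Rightarrow> real multiset" where
  "eig_mset A = Abs_multiset (\<lambda>x. order x (char_poly A))"

definition kth_largest_eig :: "nat \<Rightarrow> real mat \<Rightarrow> real" where
  "kth_largest_eig k A = rev (sorted_list_of_multiset (eig_mset A)) ! (k - 1)"

end

theory Submission
  imports Defs
begin

(*
  The n = |\<Gamma>| characters \<chi> of the finite abelian group \<Gamma> diagonalise the adjacency matrix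
  of Cay(\<Gamma>, S); the eigenvalue belonging to \<chi> is \<lambda>\<^sub>\<chi> = \<Sum>s\<in>S. \<chi> s, real because S = -S.
  Write x = Re \<chi>(g) \<in> [-1, 1].
  If \<chi>\<^sup>2 is nontrivial, then \<Sum>\<^sub>g x = \<Sum>\<^sub>g (x\<^sup>2 - 1/2) = 0 and \<Sum>\<^sub>g x\<^sup>4 \<ge> 3n/8 by orthogonality
  applied to \<chi>, \<chi>\<^sup>2 and \<chi>\<^sup>4, and summing the pointwise bound
  x \<le> 2/9 (1/2 + 9/4 x + 11/4 x\<^sup>2 - x\<^sup>4), whose right-hand side is nonnegative on [-1, 1],
  over S \<subseteq> \<Gamma> gives \<lambda>\<^sub>\<chi> \<le> n/3.
  If \<chi>, \<psi> are distinct nontrivial characters with values \<plusminus>1, the bound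
  a + b \<le> (a + b)/2 + (a + b)\<^sup>2/4 for a, b \<in> {-1, 1} gives in the same way \<lambda>\<^sub>\<chi> + \<lambda>\<^sub>\<psi> \<le> n/2.
  Hence apart from the trivial character at most one character has \<lambda>\<^sub>\<chi> > n/3, so \<lambda>\<^sub>3 \<le> n/3.
*)

section \<open>Multiples in a monoid\<close>

primrec natmul :: "nat \<Rightarrow> 'a::monoid_add \<Rightarrow> 'a" where
  "natmul 0 g = 0"
| "natmul (Suc j) g = g + natmul j g"

lemma natmul_add: "natmul (i + j) g = natmul i g + natmul j g"
  by (induct i) (simp_all add: add.assoc)

lemma natmul_mult: "natmul (i * j) g = natmul i (natmul j g)"
  by (induct i) (simp_all add: natmul_add)

lemma ex_natmul_eq_0:
  fixes g :: "'a::{group_add,finite}"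
  shows "\<exists>k>0. natmul k g = 0"
proof -
  have "\<not> inj (\<lambda>j. natmul j g)"
  proof
    assume "inj (\<lambda>j. natmul j g)"
    then have "finite (UNIV :: nat set)" using finite_imageD[of "\<lambda>j. natmul j g" UNIV] by simp
    then show False by simp
  qed
  then obtain i j where "i < j" "natmul i g = natmul j g"
    unfolding inj_def by (metis linorder_neqE_nat)
  then have "natmul (j - i) g + natmul i g = 0 + natmul i g"
    using natmul_add[of "j - i" i g] by simp
  then have "natmul (j - i) g = 0" by (rule add_right_imp_eq)
  with \<open>i < j\<close> show ?thesis by (intro exI[of _ "j - i"]) simp
qed

section \<open>Characters of subgroups\<close>

definition add_subgroup :: "'a::group_add set \<Rightarrow> bool" where
  "add_subgroup H \<longleftrightarrow> 0 \<in> H \<and> (\<forall>a\<in>H. \<forall>b\<in>H. a + b \<in> H) \<and> (\<forall>a\<in>H. - a \<in> H)"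

text \<open>A character of a subgroup \<open>H\<close> is extended by \<open>0\<close> outside \<open>H\<close>, so that distinct
  characters are distinct functions.\<close>

definition char_on :: "'a::group_add set \<Rightarrow> ('a \<Rightarrow> complex) \<Rightarrow> bool" where
  "char_on H \<chi> \<longleftrightarrow> (\<forall>a\<in>H. \<forall>b\<in>H. \<chi> (a + b) = \<chi> a * \<chi> b) \<and> (\<forall>a\<in>H. \<chi> a \<noteq> 0)
     \<and> (\<forall>a. a \<notin> H \<longrightarrow> \<chi> a = 0)"

lemma
  assumes "char_on H \<chi>"
  shows char_on_add: "a \<in> H \<Longrightarrow> b \<in> H \<Longrightarrow> \<chi> (a + b) = \<chi> a * \<chi> b"
    and char_on_nonzero: "a \<in> H \<Longrightarrow> \<chi> a \<noteq> 0"
    and char_on_outside: "a \<notin> H \<Longrightarrow> \<chi> a = 0"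
  using assms unfolding char_on_def by blast+

lemma
  assumes "add_subgroup H"
  shows add_subgroup_zero: "0 \<in> H"
    and add_subgroup_add: "a \<in> H \<Longrightarrow> b \<in> H \<Longrightarrow> a + b \<in> H"
    and add_subgroup_uminus: "a \<in> H \<Longrightarrow> - a \<in> H"
  using assms unfolding add_subgroup_def by blast+

lemma add_subgroup_UNIV: "add_subgroup UNIV"
  by (simp add: add_subgroup_def)

lemma natmul_in_add_subgroup: "add_subgroup H \<Longrightarrow> g \<in> H \<Longrightarrow> natmul j g \<in> H"
  by (induct j) (auto simp: add_subgroup_def)

lemma add_subgroup_add_cancel: "add_subgroup H \<Longrightarrow> a + b \<in> H \<Longrightarrow> b \<in> H \<Longrightarrow> a \<in> H"
  unfolding add_subgroup_def by (metis add.assoc add.right_inverse add_0_right)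

lemma char_on_0:
  assumes "char_on H \<chi>" "add_subgroup H"
  shows "\<chi> 0 = 1"
proof -
  have "0 \<in> H" using assms(2) by (rule add_subgroup_zero)
  then have "\<chi> 0 * \<chi> 0 = \<chi> 0 * 1" "\<chi> 0 \<noteq> 0"
    using char_on_add[OF assms(1), of 0 0] char_on_nonzero[OF assms(1)] by simp_all
  then show ?thesis by simp
qed

lemma char_on_natmul:
  assumes "char_on H \<chi>" "add_subgroup H" "g \<in> H"
  shows "\<chi> (natmul j g) = \<chi> g ^ j"
proof (induct j)
  case 0
  then show ?case using char_on_0[OF assms(1,2)] by simp
next
  case (Suc j)
  have "\<chi> (g + natmul j g) = \<chi> g * \<chi> (natmul j g)"
    using char_on_add[OF assms(1,3) natmul_in_add_subgroup[OF assms(2,3)]] .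
  then show ?case using Suc by simp
qed

definition enough_chars :: "'a::group_add set \<Rightarrow> bool" where
  "enough_chars H \<longleftrightarrow> (\<exists>C. finite C \<and> (\<forall>\<chi>\<in>C. char_on H \<chi>) \<and> card H \<le> card C)"

lemma enough_chars_zero: "enough_chars {0}"
proof -
  have "char_on {0} (\<lambda>x. if x = 0 then 1 else 0)" by (simp add: char_on_def)
  then show ?thesis unfolding enough_chars_def
    by (intro exI[of _ "{\<lambda>x. if x = 0 then 1 else 0}"]) auto
qed

text \<open>There are as many characters as group elements: adjoin elements \<open>g\<close> one at a time.
  If \<open>k = rel_ord\<close> is the least positive integer with \<open>k g \<in> H\<close>, then every character \<open>\<phi>\<close> of
  \<open>H\<close> extends to \<open>ext_grp = H + \<langle>g\<rangle>\<close> in \<open>k\<close> ways, by sending \<open>g\<close> to any \<open>k\<close>-th root of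
  \<open>\<phi>(k g)\<close>, while \<open>H + \<langle>g\<rangle>\<close> has at most \<open>k |H|\<close> elements.\<close>

locale char_extension =
  fixes H :: "'a::{ab_group_add,finite} set" and g :: 'a
  assumes add_subgroup: "add_subgroup H"
begin

definition rel_ord :: nat where
  "rel_ord = (LEAST k. 0 < k \<and> natmul k g \<in> H)"

lemma rel_ord: "0 < rel_ord" "natmul rel_ord g \<in> H"
proof -
  have "\<exists>k. 0 < k \<and> natmul k g \<in> H"
    using ex_natmul_eq_0[of g] add_subgroup_zero[OF add_subgroup] by auto
  from LeastI_ex[OF this] show "0 < rel_ord" "natmul rel_ord g \<in> H"
    unfolding rel_ord_def by auto
qed

lemma natmul_mult_rel_ord_in: "natmul (q * rel_ord) g \<in> H"
  using natmul_mult[of q rel_ord g] natmul_in_add_subgroup[OF add_subgroup rel_ord(2)] by simp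

lemma natmul_eq_mod_rel_ord: "natmul j g = natmul (j mod rel_ord) g + natmul (j div rel_ord * rel_ord) g"
  by (metis mod_div_mult_eq natmul_add)

lemma natmul_in_iff_dvd: "natmul j g \<in> H \<longleftrightarrow> rel_ord dvd j"
proof -
  have "natmul (j div rel_ord * rel_ord) g \<in> H" by (rule natmul_mult_rel_ord_in)
  then have "natmul j g \<in> H \<longleftrightarrow> natmul (j mod rel_ord) g \<in> H"
    using add_subgroup_add[OF add_subgroup] add_subgroup_add_cancel[OF add_subgroup]
    unfolding natmul_eq_mod_rel_ord[of j] by blast
  also have "\<dots> \<longleftrightarrow> j mod rel_ord = 0"
  proof
    assume "natmul (j mod rel_ord) g \<in> H"
    then show "j mod rel_ord = 0"
      using not_less_Least[of "j mod rel_ord" "\<lambda>k. 0 < k \<and> natmul k g \<in> H"] rel_ord(1)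
      unfolding rel_ord_def[symmetric] by auto
  next
    assume "j mod rel_ord = 0"
    then show "natmul (j mod rel_ord) g \<in> H" using add_subgroup_zero[OF add_subgroup] by simp
  qed
  finally show ?thesis by (simp add: dvd_eq_mod_eq_0)
qed

definition ext_grp :: "'a set" where
  "ext_grp = {h + natmul j g | h j. h \<in> H}"

lemma in_ext_grp_iff: "x \<in> ext_grp \<longleftrightarrow> (\<exists>h\<in>H. \<exists>j. x = h + natmul j g)"
  unfolding ext_grp_def by blast

lemma subset_ext_grp: "H \<subseteq> ext_grp"
proof
  fix h assume "h \<in> H"
  moreover have "h = h + natmul 0 g" by simp
  ultimately show "h \<in> ext_grp" unfolding in_ext_grp_iff by blast
qed

lemma in_ext_grp: "g \<in> ext_grp"
proof -
  have "g = 0 + natmul 1 g" by simp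
  then show ?thesis unfolding in_ext_grp_iff using add_subgroup_zero[OF add_subgroup] by blast
qed

lemma add_subgroup_ext_grp: "add_subgroup ext_grp"
  unfolding add_subgroup_def
proof (intro conjI ballI)
  show "0 \<in> ext_grp" using subset_ext_grp add_subgroup_zero[OF add_subgroup] by blast
next
  fix a b assume "a \<in> ext_grp" "b \<in> ext_grp"
  then obtain h1 j1 h2 j2 where ab: "a = h1 + natmul j1 g" "h1 \<in> H" "b = h2 + natmul j2 g" "h2 \<in> H"
    unfolding in_ext_grp_iff by blast
  then have "a + b = (h1 + h2) + natmul (j1 + j2) g" by (simp add: natmul_add algebra_simps)
  moreover have "h1 + h2 \<in> H" using add_subgroup_add[OF add_subgroup ab(2,4)] .
  ultimately show "a + b \<in> ext_grp" unfolding in_ext_grp_iff by blast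
next
  fix a assume "a \<in> ext_grp"
  then obtain h j where a: "a = h + natmul j g" "h \<in> H" unfolding in_ext_grp_iff by blast
  \<comment> \<open>\<open>-j g = (rel_ord - 1) j g - rel_ord j g\<close>, and the last term lies in \<open>H\<close>\<close>
  have "natmul (j * rel_ord) g = natmul ((rel_ord - 1) * j) g + natmul j g"
    using natmul_add[of "(rel_ord - 1) * j" j g] rel_ord(1)
    by (metis Suc_diff_1 mult_Suc mult.commute add.commute)
  then have "- a = (- h + - natmul (j * rel_ord) g) + natmul ((rel_ord - 1) * j) g"
    using a(1) by (simp add: algebra_simps)
  moreover have "- h + - natmul (j * rel_ord) g \<in> H"
    using add_subgroup_add add_subgroup_uminus add_subgroup a(2) natmul_mult_rel_ord_in[of j]
    by blast
  ultimately show "- a \<in> ext_grp" unfolding in_ext_grp_iff by blast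
qed

lemma card_ext_grp_le: "card ext_grp \<le> card H * rel_ord"
proof -
  have "ext_grp \<subseteq> (\<lambda>(h, j). h + natmul j g) ` (H \<times> {..<rel_ord})"
  proof
    fix x assume "x \<in> ext_grp"
    then obtain h j where x: "x = h + natmul j g" "h \<in> H" unfolding in_ext_grp_iff by blast
    have "x = (h + natmul (j div rel_ord * rel_ord) g) + natmul (j mod rel_ord) g"
      using x natmul_eq_mod_rel_ord[of j] by (simp add: algebra_simps)
    moreover have "h + natmul (j div rel_ord * rel_ord) g \<in> H"
      by (rule add_subgroup_add[OF add_subgroup x(2) natmul_mult_rel_ord_in])
    ultimately show "x \<in> (\<lambda>(h, j). h + natmul j g) ` (H \<times> {..<rel_ord})"
      using rel_ord(1) by force
  qed
  then have "card ext_grp \<le> card ((\<lambda>(h, j). h + natmul j g) ` (H \<times> {..<rel_ord}))"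
    by (intro card_mono) auto
  also have "\<dots> \<le> card (H \<times> {..<rel_ord})" by (rule card_image_le) auto
  finally show ?thesis by (simp add: card_cartesian_product)
qed

definition roots :: "('a \<Rightarrow> complex) \<Rightarrow> complex set" where
  "roots \<phi> = {w. w ^ rel_ord = \<phi> (natmul rel_ord g)}"

lemma card_roots:
  assumes "char_on H \<phi>"
  shows "card (roots \<phi>) = rel_ord"
proof -
  have "\<phi> (natmul rel_ord g) \<noteq> 0" by (rule char_on_nonzero[OF assms rel_ord(2)])
  then show ?thesis
    unfolding roots_def using bij_betw_same_card[OF bij_betw_nth_root_unity] rel_ord(1)
    by (simp add: card_roots_unity_eq)
qed

lemma extension_well_defined:
  assumes \<phi>: "char_on H \<phi>" and w: "w \<in> roots \<phi>" and h: "h1 \<in> H" "h2 \<in> H"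
    and eq: "h1 + natmul j1 g = h2 + natmul j2 g"
  shows "\<phi> h1 * w ^ j1 = \<phi> h2 * w ^ j2"
proof -
  have *: "\<phi> h1 * w ^ j1 = \<phi> h2 * w ^ j2"
    if h: "h1 \<in> H" "h2 \<in> H" and eq: "h1 + natmul j1 g = h2 + natmul j2 g" and "j1 \<le> j2"
    for h1 h2 j1 j2
  proof -
    define d where "d = j2 - j1"
    have "natmul j2 g = natmul d g + natmul j1 g"
      using natmul_add[of d j1 g] \<open>j1 \<le> j2\<close> d_def by simp
    with eq have h1_eq: "h1 = h2 + natmul d g" by (simp add: algebra_simps)
    then have "natmul d g \<in> H"
      using h add_subgroup_add_cancel[OF add_subgroup, of "natmul d g" h2] by (simp add: add.commute)
    then obtain q where d: "d = q * rel_ord"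
      unfolding natmul_in_iff_dvd by (metis dvdE mult.commute)
    have "\<phi> h1 = \<phi> h2 * \<phi> (natmul d g)"
      unfolding h1_eq by (rule char_on_add[OF \<phi> h(2) \<open>natmul d g \<in> H\<close>])
    also have "\<phi> (natmul d g) = \<phi> (natmul rel_ord g) ^ q"
      using d natmul_mult[of q rel_ord g] char_on_natmul[OF \<phi> add_subgroup rel_ord(2)] by simp
    also have "\<dots> = (w ^ rel_ord) ^ q" using w unfolding roots_def by simp
    also have "\<dots> = w ^ d" using power_mult[of w rel_ord q] d by (simp add: mult.commute)
    finally have "\<phi> h1 * w ^ j1 = \<phi> h2 * (w ^ d * w ^ j1)" by simp
    also have "w ^ d * w ^ j1 = w ^ j2" unfolding d_def using \<open>j1 \<le> j2\<close> by (simp flip: power_add)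
    finally show ?thesis .
  qed
  show ?thesis
  proof (cases "j1 \<le> j2")
    case True
    then show ?thesis by (rule *[OF h eq])
  next
    case False
    then show ?thesis using *[OF h(2,1) eq[symmetric]] by simp
  qed
qed

definition extension :: "('a \<Rightarrow> complex) \<Rightarrow> complex \<Rightarrow> 'a \<Rightarrow> complex" where
  "extension \<phi> w x = (if x \<in> ext_grp then
     (let r = (SOME r. fst r \<in> H \<and> x = fst r + natmul (snd r) g) in \<phi> (fst r) * w ^ snd r) else 0)"

lemma extension_value:
  assumes "char_on H \<phi>" "w \<in> roots \<phi>" "h \<in> H"
  shows "extension \<phi> w (h + natmul j g) = \<phi> h * w ^ j"
proof -
  let ?x = "h + natmul j g"
  have "\<exists>r. fst r \<in> H \<and> ?x = fst r + natmul (snd r) g"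
    using assms by (intro exI[of _ "(h, j)"]) auto
  from someI_ex[OF this] obtain r where r: "fst r \<in> H" "?x = fst r + natmul (snd r) g"
    and r_def: "r = (SOME r. fst r \<in> H \<and> ?x = fst r + natmul (snd r) g)" by blast
  have "?x \<in> ext_grp" using assms(3) unfolding in_ext_grp_iff by blast
  then have "extension \<phi> w ?x = \<phi> (fst r) * w ^ snd r" unfolding extension_def r_def Let_def by simp
  also have "\<dots> = \<phi> h * w ^ j" using extension_well_defined[OF assms(1,2) r(1) assms(3)] r(2) by simp
  finally show ?thesis .
qed

lemma char_on_extension:
  assumes \<phi>: "char_on H \<phi>" and w: "w \<in> roots \<phi>"
  shows "char_on ext_grp (extension \<phi> w)"
  unfolding char_on_def
proof (intro conjI ballI allI impI)
  fix a b assume "a \<in> ext_grp" "b \<in> ext_grp"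
  then obtain h1 j1 h2 j2 where ab: "a = h1 + natmul j1 g" "h1 \<in> H" "b = h2 + natmul j2 g" "h2 \<in> H"
    unfolding in_ext_grp_iff by blast
  then have "a + b = (h1 + h2) + natmul (j1 + j2) g" by (simp add: natmul_add algebra_simps)
  moreover have "h1 + h2 \<in> H" using add_subgroup_add[OF add_subgroup ab(2,4)] .
  ultimately have "extension \<phi> w (a + b) = \<phi> (h1 + h2) * w ^ (j1 + j2)"
    using extension_value[OF \<phi> w] by simp
  moreover have "\<phi> (h1 + h2) = \<phi> h1 * \<phi> h2" by (rule char_on_add[OF \<phi> ab(2,4)])
  ultimately show "extension \<phi> w (a + b) = extension \<phi> w a * extension \<phi> w b"
    using ab extension_value[OF \<phi> w] by (simp add: power_add)
next
  fix a assume "a \<in> ext_grp"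
  then obtain h j where a: "a = h + natmul j g" "h \<in> H" unfolding in_ext_grp_iff by blast
  have "\<phi> (natmul rel_ord g) \<noteq> 0" by (rule char_on_nonzero[OF \<phi> rel_ord(2)])
  then have "w \<noteq> 0" using w rel_ord(1) unfolding roots_def by (auto simp: zero_power)
  moreover have "\<phi> h \<noteq> 0" by (rule char_on_nonzero[OF \<phi> a(2)])
  ultimately show "extension \<phi> w a \<noteq> 0" using extension_value[OF \<phi> w a(2)] a by simp
next
  fix a assume "a \<notin> ext_grp"
  then show "extension \<phi> w a = 0" unfolding extension_def by simp
qed

lemma inj_on_extension:
  assumes "\<forall>\<phi>\<in>C. char_on H \<phi>"
  shows "inj_on (\<lambda>(\<phi>, w). extension \<phi> w) (SIGMA \<phi>:C. roots \<phi>)"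
proof (rule inj_onI, clarify)
  fix \<phi>1 w1 \<phi>2 w2
  assume C: "\<phi>1 \<in> C" "w1 \<in> roots \<phi>1" "\<phi>2 \<in> C" "w2 \<in> roots \<phi>2"
    and eq: "extension \<phi>1 w1 = extension \<phi>2 w2"
  have \<phi>: "char_on H \<phi>1" "char_on H \<phi>2" and w: "w1 \<in> roots \<phi>1" "w2 \<in> roots \<phi>2"
    using assms C by simp_all
  have ext_eq: "\<phi>1 h * w1 ^ j = \<phi>2 h * w2 ^ j" if "h \<in> H" for h j
  proof -
    have "\<phi>1 h * w1 ^ j = extension \<phi>1 w1 (h + natmul j g)"
      by (rule extension_value[OF \<phi>(1) w(1) that, symmetric])
    also have "\<dots> = \<phi>2 h * w2 ^ j" unfolding eq by (rule extension_value[OF \<phi>(2) w(2) that])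
    finally show ?thesis .
  qed
  have "\<phi>1 = \<phi>2"
  proof
    fix x
    show "\<phi>1 x = \<phi>2 x"
    proof (cases "x \<in> H")
      case True
      then show ?thesis using ext_eq[of x 0] by simp
    next
      case False
      then show ?thesis using char_on_outside[OF \<phi>(1)] char_on_outside[OF \<phi>(2)] by simp
    qed
  qed
  moreover have "w1 = w2"
    using ext_eq[of 0 1] add_subgroup_zero[OF add_subgroup]
      char_on_0[OF \<phi>(1) add_subgroup] char_on_0[OF \<phi>(2) add_subgroup]
    by simp
  ultimately show "\<phi>1 = \<phi>2 \<and> w1 = w2" by blast
qed

lemma enough_chars_ext_grp:
  assumes "enough_chars H"
  shows "enough_chars ext_grp"
proof -
  obtain C where C: "finite C" "\<forall>\<phi>\<in>C. char_on H \<phi>" "card H \<le> card C"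
    using assms unfolding enough_chars_def by blast
  define C' where "C' = (\<lambda>(\<phi>, w). extension \<phi> w) ` (SIGMA \<phi>:C. roots \<phi>)"
  have fin: "finite (roots \<phi>)" if "\<phi> \<in> C" for \<phi>
    using card_roots[of \<phi>] C(2) that rel_ord(1) by (intro card_ge_0_finite) simp
  have "card C' = card (SIGMA \<phi>:C. roots \<phi>)"
    unfolding C'_def by (rule card_image[OF inj_on_extension[OF C(2)]])
  also have "\<dots> = (\<Sum>\<phi>\<in>C. card (roots \<phi>))" using C(1) fin by (simp add: card_SigmaI)
  also have "\<dots> = card C * rel_ord" using C(2) card_roots by simp
  finally have "card ext_grp \<le> card C'"
    using card_ext_grp_le mult_le_mono1[OF C(3), of rel_ord] by linarith
  moreover have "finite C'" unfolding C'_def using C(1) fin by auto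
  moreover have "\<forall>\<psi>\<in>C'. char_on ext_grp \<psi>" unfolding C'_def using char_on_extension C(2) by auto
  ultimately show ?thesis unfolding enough_chars_def by blast
qed

end

lemma enough_chars_UNIV: "enough_chars (UNIV :: 'a::{ab_group_add,finite} set)"
proof -
  have "enough_chars (UNIV :: 'a set)" if "add_subgroup H" "enough_chars H" for H :: "'a set"
    using that
  proof (induction "card (UNIV - H)" arbitrary: H rule: less_induct)
    case less
    show ?case
    proof (cases "H = UNIV")
      case True
      then show ?thesis using less.prems by simp
    next
      case False
      then obtain g where "g \<notin> H" by auto
      interpret char_extension H g by unfold_locales (fact less.prems(1))
      have "UNIV - ext_grp \<subset> UNIV - H" using subset_ext_grp in_ext_grp \<open>g \<notin> H\<close> by auto
      then have "card (UNIV - ext_grp) < card (UNIV - H)" by (rule psubset_card_mono[OF finite])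
      then show ?thesis
        by (rule less.hyps[OF _ add_subgroup_ext_grp enough_chars_ext_grp[OF less.prems(2)]])
    qed
  qed
  moreover have "add_subgroup {0 :: 'a}" by (simp add: add_subgroup_def)
  ultimately show ?thesis using enough_chars_zero by blast
qed

section \<open>Characters of a finite abelian group\<close>

abbreviation character :: "('a::group_add \<Rightarrow> complex) \<Rightarrow> bool" where
  "character \<equiv> char_on UNIV"

lemma ex_distinct_characters:
  obtains chs :: "('a::{ab_group_add,finite} \<Rightarrow> complex) list"
  where "distinct chs" "length chs = CARD('a)" "\<forall>\<chi>\<in>set chs. character \<chi>"
proof -
  obtain C :: "('a \<Rightarrow> complex) set" where C: "finite C" "\<forall>\<chi>\<in>C. character \<chi>" "CARD('a) \<le> card C"
    using enough_chars_UNIV unfolding enough_chars_def by blast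
  obtain C' where C': "C' \<subseteq> C" "card C' = CARD('a)" "finite C'"
    by (rule obtain_subset_with_card_n[OF C(3)])
  obtain chs where chs: "set chs = C'" "distinct chs"
    using finite_distinct_list[OF C'(3)] by blast
  then have "length chs = CARD('a)" using distinct_card[OF chs(2)] C'(2) by simp
  moreover have "\<forall>\<chi>\<in>set chs. character \<chi>" using chs(1) C'(1) C(2) by blast
  ultimately show ?thesis using that chs(2) by blast
qed

lemma character_add: "character \<chi> \<Longrightarrow> \<chi> (a + b) = \<chi> a * \<chi> b"
  by (simp add: char_on_add)

lemma character_nonzero: "character \<chi> \<Longrightarrow> \<chi> a \<noteq> 0"
  by (simp add: char_on_nonzero)

lemma character_0: "character \<chi> \<Longrightarrow> \<chi> 0 = 1"
  using char_on_0 add_subgroup_UNIV by blast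

lemma norm_character:
  fixes \<chi> :: "'a::{group_add,finite} \<Rightarrow> complex"
  assumes "character \<chi>"
  shows "norm (\<chi> a) = 1"
proof -
  obtain k where k: "k > 0" "natmul k a = 0" using ex_natmul_eq_0 by blast
  have "\<chi> a ^ k = 1"
    using char_on_natmul[OF assms add_subgroup_UNIV, of a k] k character_0[OF assms] by simp
  then have "norm (\<chi> a) ^ k = 1 ^ k" by (metis norm_one norm_power power_one)
  then show ?thesis using k(1) power_eq_iff_eq_base[of k "norm (\<chi> a)" 1] by simp
qed

lemma cnj_character_mult:
  fixes \<chi> :: "'a::{group_add,finite} \<Rightarrow> complex"
  assumes "character \<chi>"
  shows "cnj (\<chi> a) * \<chi> a = 1"
  using complex_norm_square[of "\<chi> a"] norm_character[OF assms] by (simp add: mult.commute)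

lemma character_uminus:
  fixes \<chi> :: "'a::{group_add,finite} \<Rightarrow> complex"
  assumes "character \<chi>"
  shows "\<chi> (- a) = cnj (\<chi> a)"
proof -
  have "\<chi> (- a) * \<chi> a = cnj (\<chi> a) * \<chi> a"
    using character_add[OF assms, of "- a" a] character_0[OF assms] cnj_character_mult[OF assms]
    by simp
  then show ?thesis using character_nonzero[OF assms, of a] by simp
qed

lemma character_mult: "character \<chi> \<Longrightarrow> character \<psi> \<Longrightarrow> character (\<lambda>g. \<chi> g * \<psi> g)"
  for \<chi> :: "'a::ab_group_add \<Rightarrow> complex"
  unfolding char_on_def by (auto simp: algebra_simps)

lemma character_cnj: "character \<chi> \<Longrightarrow> character (\<lambda>g. cnj (\<chi> g))"
  unfolding char_on_def by auto

lemma character_power: "character \<chi> \<Longrightarrow> character (\<lambda>g. \<chi> g ^ m)"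
  unfolding char_on_def by (auto simp: power_mult_distrib)

lemma sum_character:
  fixes \<chi> :: "'a::{ab_group_add,finite} \<Rightarrow> complex"
  assumes "character \<chi>"
  shows "(\<Sum>g\<in>UNIV. \<chi> g) = (if \<chi> = (\<lambda>_. 1) then of_nat CARD('a) else 0)"
proof (cases "\<chi> = (\<lambda>_. 1)")
  case False
  then obtain h where h: "\<chi> h \<noteq> 1" by auto
  have "(\<Sum>g\<in>UNIV. \<chi> g) = (\<Sum>g\<in>UNIV. \<chi> (h + g))"
    by (rule sum.reindex_bij_witness[of _ "\<lambda>g. h + g" "\<lambda>g. g - h"]) (auto simp: algebra_simps)
  also have "\<dots> = \<chi> h * (\<Sum>g\<in>UNIV. \<chi> g)"
    using character_add[OF assms] by (simp add: sum_distrib_left)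
  finally have "(1 - \<chi> h) * (\<Sum>g\<in>UNIV. \<chi> g) = 0" by (simp add: algebra_simps)
  then show ?thesis using h False by simp
qed simp

lemma Re_sum_nontrivial_character:
  fixes \<chi> :: "'a::{ab_group_add,finite} \<Rightarrow> complex"
  assumes "character \<chi>" "\<chi> \<noteq> (\<lambda>_. 1)"
  shows "(\<Sum>g\<in>UNIV. Re (\<chi> g)) = 0"
  using sum_character[OF assms(1)] assms(2) by (simp add: Re_sum[symmetric] del: Re_sum)

lemma sum_character_mult_cnj:
  fixes \<chi> \<psi> :: "'a::{ab_group_add,finite} \<Rightarrow> complex"
  assumes "character \<chi>" "character \<psi>"
  shows "(\<Sum>g\<in>UNIV. \<chi> g * cnj (\<psi> g)) = (if \<chi> = \<psi> then of_nat CARD('a) else 0)"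
proof -
  have "(\<lambda>g. \<chi> g * cnj (\<psi> g)) = (\<lambda>_. 1) \<longleftrightarrow> \<chi> = \<psi>"
  proof
    assume "(\<lambda>g. \<chi> g * cnj (\<psi> g)) = (\<lambda>_. 1)"
    then have "\<chi> g * (cnj (\<psi> g) * \<psi> g) = \<psi> g" for g by (metis mult.assoc mult_1)
    then show "\<chi> = \<psi>" using cnj_character_mult[OF assms(2)] by auto
  qed (use cnj_character_mult[OF assms(2)] in \<open>simp add: mult.commute\<close>)
  then show ?thesis
    using sum_character[OF character_mult[OF assms(1) character_cnj[OF assms(2)]]] by simp
qed

section \<open>The spectrum of a Cayley graph\<close>

definition char_eigenvalue :: "'a set \<Rightarrow> ('a \<Rightarrow> complex) \<Rightarrow> complex" where
  "char_eigenvalue S \<chi> = (\<Sum>s\<in>S. \<chi> s)"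

lemma char_eigenvalue_uminus:
  assumes "uminus ` S = S"
  shows "(\<Sum>s\<in>S. \<chi> (- s)) = char_eigenvalue S (\<chi> :: 'a::group_add \<Rightarrow> complex)"
  using sum.reindex[of uminus S \<chi>] assms unfolding char_eigenvalue_def by (simp add: inj_on_def)

lemma of_real_Re_char_eigenvalue:
  fixes \<chi> :: "'a::{group_add,finite} \<Rightarrow> complex"
  assumes "character \<chi>" "uminus ` S = S"
  shows "of_real (Re (char_eigenvalue S \<chi>)) = char_eigenvalue S \<chi>"
proof -
  have "char_eigenvalue S \<chi> = cnj (char_eigenvalue S \<chi>)"
    using char_eigenvalue_uminus[OF assms(2), of \<chi>] character_uminus[OF assms(1)]
    unfolding char_eigenvalue_def by (simp add: cnj_sum)
  from arg_cong[OF this, of Im] have "Im (char_eigenvalue S \<chi>) = 0" by simp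
  then show ?thesis by (simp add: complex_eq_iff)
qed

lemma cayley_character_eigenvector:
  fixes \<chi> :: "'a::{ab_group_add,finite} \<Rightarrow> complex"
  assumes "character \<chi>" "uminus ` S = S"
  shows "(\<Sum>x\<in>UNIV. (if a - x \<in> S then 1 else 0) * \<chi> x) = \<chi> a * char_eigenvalue S \<chi>"
proof -
  have "(\<Sum>x\<in>UNIV. (if a - x \<in> S then 1 else 0) * \<chi> x) = (\<Sum>x\<in>UNIV. if a - x \<in> S then \<chi> x else 0)"
    by (intro sum.cong) auto
  also have "\<dots> = (\<Sum>x\<in>{x\<in>UNIV. a - x \<in> S}. \<chi> x)" by (rule sum.inter_filter[symmetric]) simp
  also have "{x\<in>UNIV. a - x \<in> S} = (\<lambda>s. a - s) ` S" by (force simp: image_iff)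
  also have "sum \<chi> ((\<lambda>s. a - s) ` S) = (\<Sum>s\<in>S. \<chi> (a - s))"
    by (subst sum.reindex) (auto intro: inj_onI)
  also have "\<dots> = (\<Sum>s\<in>S. \<chi> a * \<chi> (- s))"
    by (intro sum.cong refl) (metis character_add[OF assms(1)] diff_conv_add_uminus)
  also have "\<dots> = \<chi> a * (\<Sum>s\<in>S. \<chi> (- s))" by (rule sum_distrib_left[symmetric])
  finally show ?thesis using char_eigenvalue_uminus[OF assms(2)] by simp
qed

lemma elem_enum_bij: "bij_betw (elem_enum :: nat \<Rightarrow> 'a::finite) {..<CARD('a)} UNIV"
proof -
  have "\<exists>f. bij_betw f {..<CARD('a)} (UNIV :: 'a set)"
    using ex_bij_betw_nat_finite[of "UNIV :: 'a set"] by (simp add: atLeast0LessThan)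
  then show ?thesis unfolding elem_enum_def by (rule someI_ex)
qed

lemma eig_mset_prod_linear: "eig_mset A = mset rs" if "char_poly A = (\<Prod>r\<leftarrow>rs. [:- r, 1:])"
proof -
  have "order x (\<Prod>r\<leftarrow>rs. [:- r, 1:]) = count (mset rs) x" for x
  proof (induct rs)
    case (Cons r rs)
    have "(\<Prod>r\<leftarrow>rs. [:- r, 1:]) \<noteq> 0" by (auto simp: prod_list_zero_iff)
    then have "order x ([:- r, 1:] * (\<Prod>r\<leftarrow>rs. [:- r, 1:]))
        = order x [:- r, 1:] + order x (\<Prod>r\<leftarrow>rs. [:- r, 1:])"
      by (intro order_mult no_zero_divisors) simp_all
    then show ?case using Cons by (simp add: order_linear' del: mult_pCons_left)
  qed (simp add: order_1_eq_0)
  then show ?thesis unfolding eig_mset_def that by (simp add: count_inverse)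
qed

lemma eig_mset_similar_upper_triangular:
  fixes A :: "real mat" and T :: "complex mat"
  assumes "A \<in> carrier_mat n n" "similar_mat (map_mat complex_of_real A) T"
    and "T \<in> carrier_mat n n" "upper_triangular T" "diag_mat T = map complex_of_real rs"
  shows "eig_mset A = mset rs"
proof -
  interpret of_real: map_poly_inj_comm_ring_hom complex_of_real ..
  have "map_poly complex_of_real (char_poly A) = char_poly (map_mat complex_of_real A)"
    by (rule of_real_hom.char_poly_hom[OF assms(1), symmetric])
  also have "\<dots> = char_poly T" by (rule char_poly_similar[OF assms(2)])
  also have "\<dots> = (\<Prod>a\<leftarrow>diag_mat T. [:- a, 1:])" by (rule char_poly_upper_triangular[OF assms(3,4)])
  also have "\<dots> = map_poly complex_of_real (\<Prod>r\<leftarrow>rs. [:- r, 1:])"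
    unfolding assms(5) by (simp add: of_real.hom_prod_list o_def)
  finally show ?thesis by (intro eig_mset_prod_linear) simp
qed

definition char_matrix :: "('a::finite \<Rightarrow> complex) list \<Rightarrow> complex mat" where
  "char_matrix chs = mat CARD('a) CARD('a) (\<lambda>(i, j). (chs ! j) (elem_enum i))"

definition dual_char_matrix :: "('a::finite \<Rightarrow> complex) list \<Rightarrow> complex mat" where
  "dual_char_matrix chs = mat CARD('a) CARD('a) (\<lambda>(i, j). cnj ((chs ! i) (elem_enum j)) / CARD('a))"

lemma sum_elem_enum: "(\<Sum>k<CARD('a). f (elem_enum k)) = (\<Sum>x\<in>UNIV. f (x :: 'a::finite))"
  using sum.reindex_bij_betw[OF elem_enum_bij] .

lemma dual_char_matrix_mult_char_matrix:
  fixes chs :: "('a::{ab_group_add,finite} \<Rightarrow> complex) list"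
  assumes "distinct chs" "length chs = CARD('a)" "\<forall>\<chi>\<in>set chs. character \<chi>"
  shows "dual_char_matrix chs * char_matrix chs = 1\<^sub>m CARD('a)"
proof (rule eq_matI)
  fix i j
  assume "i < dim_row (1\<^sub>m CARD('a) :: complex mat)" "j < dim_col (1\<^sub>m CARD('a) :: complex mat)"
  then have ij: "i < CARD('a)" "j < CARD('a)" by auto
  then have "character (chs ! i)" "character (chs ! j)" using assms(2,3) by simp_all
  have "(dual_char_matrix chs * char_matrix chs) $$ (i, j)
      = (\<Sum>k<CARD('a). (chs ! j) (elem_enum k) * cnj ((chs ! i) (elem_enum k))) / CARD('a)"
    using ij by (simp add: dual_char_matrix_def char_matrix_def scalar_prod_def atLeast0LessThan
        sum_divide_distrib mult.commute)
  also have "\<dots> = (\<Sum>x\<in>UNIV. (chs ! j) x * cnj ((chs ! i) x)) / CARD('a)"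
    by (simp only: sum_elem_enum[of "\<lambda>x. (chs ! j) x * cnj ((chs ! i) x)"])
  also have "\<dots> = (if chs ! j = chs ! i then 1 else 0)"
    using sum_character_mult_cnj[OF \<open>character (chs ! j)\<close> \<open>character (chs ! i)\<close>] by simp
  also have "\<dots> = 1\<^sub>m CARD('a) $$ (i, j)"
    using ij assms(1,2) nth_eq_iff_index_eq[OF assms(1), of j i] by auto
  finally show "(dual_char_matrix chs * char_matrix chs) $$ (i, j) = 1\<^sub>m CARD('a) $$ (i, j)" .
qed (auto simp: dual_char_matrix_def char_matrix_def)

lemma cayley_adj_mult_char_matrix:
  fixes chs :: "('a::{ab_group_add,finite} \<Rightarrow> complex) list"
  assumes "length chs = CARD('a)" "\<forall>\<chi>\<in>set chs. character \<chi>" "uminus ` S = S"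
  defines "D \<equiv> mat CARD('a) CARD('a) (\<lambda>(i, j). if i = j then char_eigenvalue S (chs ! i) else 0)"
  shows "map_mat complex_of_real (cayley_adj S) * char_matrix chs = char_matrix chs * D"
proof (rule eq_matI)
  fix i j assume "i < dim_row (char_matrix chs * D)" "j < dim_col (char_matrix chs * D)"
  then have ij: "i < CARD('a)" "j < CARD('a)" by (simp_all add: char_matrix_def D_def)
  then have "character (chs ! j)" using assms(1,2) by simp
  have "(map_mat complex_of_real (cayley_adj S) * char_matrix chs) $$ (i, j)
      = (\<Sum>k<CARD('a). (if elem_enum i - elem_enum k \<in> S then 1 else 0) * (chs ! j) (elem_enum k))"
    using ij by (simp add: cayley_adj_def char_matrix_def scalar_prod_def atLeast0LessThan
        if_distrib[of complex_of_real] cong: if_cong)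
  also have "\<dots> = (chs ! j) (elem_enum i) * char_eigenvalue S (chs ! j)"
    unfolding sum_elem_enum[of "\<lambda>x. (if elem_enum i - x \<in> S then 1 else 0) * (chs ! j) x"]
    by (rule cayley_character_eigenvector[OF \<open>character (chs ! j)\<close> assms(3)])
  also have "\<dots> = (\<Sum>k<CARD('a).
      (chs ! k) (elem_enum i) * (if k = j then char_eigenvalue S (chs ! k) else 0))"
    using ij by (simp add: if_distrib[where f = "times _"] cong: if_cong)
  also have "\<dots> = (char_matrix chs * D) $$ (i, j)"
    using ij by (simp add: char_matrix_def D_def scalar_prod_def atLeast0LessThan)
  finally show "(map_mat complex_of_real (cayley_adj S) * char_matrix chs) $$ (i, j)
      = (char_matrix chs * D) $$ (i, j)" .
qed (auto simp: cayley_adj_def char_matrix_def D_def)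

lemma eig_mset_cayley_adj:
  fixes S :: "'a::{ab_group_add,finite} set"
  assumes "distinct chs" "length chs = CARD('a)" "\<forall>\<chi>\<in>set chs. character \<chi>"
    and "uminus ` S = S"
  shows "eig_mset (cayley_adj S) = mset (map (\<lambda>\<chi>. Re (char_eigenvalue S \<chi>)) chs)"
proof -
  let ?n = "CARD('a)"
  define X where "X = char_matrix chs"
  define Y where "Y = dual_char_matrix chs"
  define D where "D = mat ?n ?n (\<lambda>(i, j). if i = j then char_eigenvalue S (chs ! i) else 0)"
  let ?A = "map_mat complex_of_real (cayley_adj S)"
  have carrier: "?A \<in> carrier_mat ?n ?n" "X \<in> carrier_mat ?n ?n" "Y \<in> carrier_mat ?n ?n"
    "D \<in> carrier_mat ?n ?n"
    by (simp_all add: cayley_adj_def X_def Y_def D_def char_matrix_def dual_char_matrix_def)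
  have YX: "Y * X = 1\<^sub>m ?n"
    unfolding X_def Y_def by (rule dual_char_matrix_mult_char_matrix[OF assms(1-3)])
  then have XY: "X * Y = 1\<^sub>m ?n" by (rule mat_mult_left_right_inverse[OF carrier(3,2)])
  have "?A = ?A * (X * Y)" using carrier XY by simp
  also have "\<dots> = (?A * X) * Y" using carrier by (simp add: assoc_mult_mat)
  also have "\<dots> = X * D * Y"
    using cayley_adj_mult_char_matrix[OF assms(2-4)] by (simp add: X_def D_def)
  finally have "similar_mat ?A D"
    by (intro similar_matI[of ?A D X Y ?n]) (use carrier XY YX in auto)
  moreover have "diag_mat D = map (\<lambda>\<chi>. complex_of_real (Re (char_eigenvalue S \<chi>))) chs"
    using assms(2,3) by (intro nth_equalityI)
      (simp_all add: diag_mat_def D_def of_real_Re_char_eigenvalue[OF _ assms(4)])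
  moreover have "upper_triangular D" by (simp add: upper_triangular_def D_def)
  ultimately show ?thesis
    using carrier by (intro eig_mset_similar_upper_triangular[where T = D])
      (simp_all add: cayley_adj_def)
qed

section \<open>Bounds on the character sums\<close>

lemma Re_power2_of_norm_1:
  fixes z :: complex
  assumes "norm z = 1"
  shows "(Re z)\<^sup>2 = (1 + Re (z\<^sup>2)) / 2"
proof -
  have "(Re z)\<^sup>2 + (Im z)\<^sup>2 = 1" using assms cmod_power2[of z] by simp
  moreover have "Re (z\<^sup>2) = (Re z)\<^sup>2 - (Im z)\<^sup>2" by (simp add: power2_eq_square)
  ultimately show ?thesis by simp
qed

lemma Re_power4_of_norm_1:
  fixes z :: complex
  assumes "norm z = 1"
  shows "(Re z) ^ 4 = (3 + 4 * Re (z\<^sup>2) + Re (z ^ 4)) / 8"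
proof -
  have "(Re z) ^ 4 = ((1 + Re (z\<^sup>2)) / 2)\<^sup>2"
    using Re_power2_of_norm_1[OF assms] by (metis power_mult numeral_Bit0_eq_double mult_2_right)
  also have "(Re (z\<^sup>2))\<^sup>2 = (1 + Re (z ^ 4)) / 2"
    using Re_power2_of_norm_1[of "z\<^sup>2"] assms by (simp add: norm_power flip: power_mult)
  ultimately show ?thesis by (simp add: power2_eq_square field_simps)
qed

lemma quartic_majorant:
  fixes x :: real
  assumes "-1 \<le> x" "x \<le> 1"
  shows "x \<le> 2/9 * (1/2 + 9/4 * x + 11/4 * x\<^sup>2 - x ^ 4)"
    and "0 \<le> 2/9 * (1/2 + 9/4 * x + 11/4 * x\<^sup>2 - x ^ 4)"
proof -
  have "0 \<le> (x - 1/2)\<^sup>2 * ((1 - x) * (x + 2))" "0 \<le> (x + 1/2)\<^sup>2 * ((2 - x) * (1 + x))"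
    using assms by (intro mult_nonneg_nonneg; simp)+
  moreover have "2/9 * (1/2 + 9/4 * x + 11/4 * x\<^sup>2 - x ^ 4) - x = 2/9 * ((x - 1/2)\<^sup>2 * ((1 - x) * (x + 2)))"
    "2/9 * (1/2 + 9/4 * x + 11/4 * x\<^sup>2 - x ^ 4) = 2/9 * ((x + 1/2)\<^sup>2 * ((2 - x) * (1 + x)))"
    by (simp_all add: power2_eq_square power4_eq_xxxx field_simps)
  ultimately show "x \<le> 2/9 * (1/2 + 9/4 * x + 11/4 * x\<^sup>2 - x ^ 4)"
    and "0 \<le> 2/9 * (1/2 + 9/4 * x + 11/4 * x\<^sup>2 - x ^ 4)"
    by linarith+
qed

lemma sum_le_sum_majorant:
  fixes f p :: "'a \<Rightarrow> real"
  assumes "finite A" "S \<subseteq> A" "\<And>x. x \<in> A \<Longrightarrow> f x \<le> p x" "\<And>x. x \<in> A \<Longrightarrow> 0 \<le> p x"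
  shows "sum f S \<le> sum p A"
proof -
  have "sum f S \<le> sum p S" using assms(2,3) by (intro sum_mono) auto
  also have "\<dots> \<le> sum p A" using assms(1,2,4) by (intro sum_mono2) auto
  finally show ?thesis .
qed

lemma sum_Re_character_powers:
  fixes \<chi> :: "'a::{ab_group_add,finite} \<Rightarrow> complex"
  assumes "character \<chi>" "(\<lambda>g. \<chi> g ^ 2) \<noteq> (\<lambda>_. 1)"
  shows "(\<Sum>g\<in>UNIV. Re (\<chi> g)) = 0"
    and "(\<Sum>g\<in>UNIV. (Re (\<chi> g))\<^sup>2) = CARD('a) / 2"
    and "3 * CARD('a) / 8 \<le> (\<Sum>g\<in>UNIV. (Re (\<chi> g)) ^ 4)"
proof -
  have "\<chi> \<noteq> (\<lambda>_. 1)" using assms(2) by auto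
  then show "(\<Sum>g\<in>UNIV. Re (\<chi> g)) = 0" by (rule Re_sum_nontrivial_character[OF assms(1)])
  have sum_Re2: "(\<Sum>g\<in>UNIV. Re (\<chi> g ^ 2)) = 0"
    by (rule Re_sum_nontrivial_character[OF character_power[OF assms(1)] assms(2)])
  then show "(\<Sum>g\<in>UNIV. (Re (\<chi> g))\<^sup>2) = CARD('a) / 2"
    using norm_character[OF assms(1)]
    by (simp add: Re_power2_of_norm_1 sum_divide_distrib[symmetric] sum.distrib)
  have "0 \<le> (\<Sum>g\<in>UNIV. Re (\<chi> g ^ 4))"
    using sum_character[OF character_power[OF assms(1)], of 4]
    by (simp add: Re_sum[symmetric] del: Re_sum)
  then show "3 * CARD('a) / 8 \<le> (\<Sum>g\<in>UNIV. (Re (\<chi> g)) ^ 4)"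
    using sum_Re2 norm_character[OF assms(1)]
    by (simp add: Re_power4_of_norm_1 sum_divide_distrib[symmetric] sum.distrib
        sum_distrib_left[symmetric])
qed

lemma Re_char_eigenvalue_le_third:
  fixes \<chi> :: "'a::{ab_group_add,finite} \<Rightarrow> complex"
  assumes "character \<chi>" "(\<lambda>g. \<chi> g ^ 2) \<noteq> (\<lambda>_. 1)"
  shows "Re (char_eigenvalue S \<chi>) \<le> CARD('a) / 3"
proof -
  define x where "x g = Re (\<chi> g)" for g
  define p where "p y = 2/9 * (1/2 + 9/4 * y + 11/4 * y\<^sup>2 - y ^ 4)" for y :: real
  have x_bounds: "-1 \<le> x g \<and> x g \<le> 1" for g
    using abs_Re_le_cmod[of "\<chi> g"] norm_character[OF assms(1), of g] unfolding x_def by auto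
  have "Re (char_eigenvalue S \<chi>) = (\<Sum>s\<in>S. x s)"
    unfolding char_eigenvalue_def x_def by simp
  also have "\<dots> \<le> (\<Sum>g\<in>UNIV. p (x g))"
    using quartic_majorant x_bounds unfolding p_def by (intro sum_le_sum_majorant) auto
  also have "\<dots> = 2/9 * (\<Sum>g\<in>UNIV. 1/2 + 9/4 * x g + 11/4 * (x g)\<^sup>2 - (x g) ^ 4)"
    unfolding p_def by (simp add: sum_distrib_left)
  also have "(\<Sum>g\<in>UNIV. 1/2 + 9/4 * x g + 11/4 * (x g)\<^sup>2 - (x g) ^ 4)
      = CARD('a) / 2 + 9/4 * (\<Sum>g\<in>UNIV. x g) + 11/4 * (\<Sum>g\<in>UNIV. (x g)\<^sup>2)
        - (\<Sum>g\<in>UNIV. (x g) ^ 4)"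
    by (simp add: sum.distrib sum_subtractf sum_distrib_left)
  finally show ?thesis using sum_Re_character_powers[OF assms] unfolding x_def by simp
qed

lemma complex_power2_eq_1:
  fixes z :: complex
  assumes "z\<^sup>2 = 1"
  shows "z = of_real (Re z)" "Re z = 1 \<or> Re z = -1"
proof -
  have "z = 1 \<or> z = -1" using assms by (simp add: power2_eq_1_iff)
  then show "z = of_real (Re z)" "Re z = 1 \<or> Re z = -1" by auto
qed

lemma Re_char_eigenvalue_add_le_half:
  fixes \<chi> \<psi> :: "'a::{ab_group_add,finite} \<Rightarrow> complex"
  assumes "character \<chi>" "character \<psi>" "\<chi> \<noteq> \<psi>" "\<chi> \<noteq> (\<lambda>_. 1)" "\<psi> \<noteq> (\<lambda>_. 1)"
    and "\<forall>g. \<chi> g ^ 2 = 1" "\<forall>g. \<psi> g ^ 2 = 1"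
  shows "Re (char_eigenvalue S \<chi>) + Re (char_eigenvalue S \<psi>) \<le> CARD('a) / 2"
proof -
  define a where "a g = Re (\<chi> g)" for g
  define b where "b g = Re (\<psi> g)" for g
  define q where "q g = (a g + b g) / 2 + (a g + b g)\<^sup>2 / 4" for g
  have \<chi>_eq: "\<chi> g = of_real (a g)" and a: "a g = 1 \<or> a g = -1" for g
    using complex_power2_eq_1[of "\<chi> g"] assms(6) unfolding a_def by simp_all
  have \<psi>_eq: "\<psi> g = of_real (b g)" and b: "b g = 1 \<or> b g = -1" for g
    using complex_power2_eq_1[of "\<psi> g"] assms(7) unfolding b_def by simp_all
  have q: "q g = a g / 2 + b g / 2 + 1/2 + a g * b g / 2" "a g + b g \<le> q g" "0 \<le> q g" for g
    using a[of g] b[of g] unfolding q_def by (auto simp: power2_eq_square algebra_simps)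
  have "(\<lambda>g. \<chi> g * \<psi> g) \<noteq> (\<lambda>_. 1)"
  proof
    assume one: "(\<lambda>g. \<chi> g * \<psi> g) = (\<lambda>_. 1)"
    have "\<chi> g = \<psi> g" for g
    proof -
      have "of_real (a g * b g) = (1 :: complex)"
        using fun_cong[OF one, of g] unfolding \<chi>_eq \<psi>_eq by simp
      then have "a g * b g = 1" by (simp only: of_real_eq_1_iff)
      then show ?thesis using a[of g] b[of g] unfolding \<chi>_eq \<psi>_eq by auto
    qed
    with assms(3) show False by auto
  qed
  then have "(\<Sum>g\<in>UNIV. a g * b g) = 0"
    using Re_sum_nontrivial_character[OF character_mult[OF assms(1,2)]] by (simp add: \<chi>_eq \<psi>_eq)
  moreover have "(\<Sum>g\<in>UNIV. a g) = 0" "(\<Sum>g\<in>UNIV. b g) = 0"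
    unfolding a_def b_def using Re_sum_nontrivial_character assms(1,2,4,5) by blast+
  moreover have "Re (char_eigenvalue S \<chi>) + Re (char_eigenvalue S \<psi>) = (\<Sum>s\<in>S. a s + b s)"
    unfolding char_eigenvalue_def a_def b_def by (simp add: sum.distrib)
  moreover have "\<dots> \<le> (\<Sum>g\<in>UNIV. q g)" using q(2,3) by (intro sum_le_sum_majorant) auto
  moreover have "(\<Sum>g\<in>UNIV. q g) = (\<Sum>g\<in>UNIV. a g) / 2 + (\<Sum>g\<in>UNIV. b g) / 2 + CARD('a) / 2
      + (\<Sum>g\<in>UNIV. a g * b g) / 2"
    unfolding q(1) by (simp add: sum.distrib sum_divide_distrib[symmetric])
  ultimately show ?thesis by linarith
qed

lemma nth_rev_sort_le:
  fixes xs :: "'a::linorder list"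
  assumes "k < length xs" "length (filter (\<lambda>x. t < x) xs) \<le> k"
  shows "rev (sort xs) ! k \<le> t"
proof (rule ccontr)
  assume "\<not> ?thesis"
  let ?L = "rev (sort xs)"
  have "t < ?L ! i" if "i \<le> k" for i
  proof -
    have "?L ! k \<le> ?L ! i"
      using that assms(1) sorted_nth_mono[of "sort xs" "length xs - Suc k" "length xs - Suc i"]
      by (simp add: rev_nth)
    then show ?thesis using \<open>\<not> ?L ! k \<le> t\<close> by simp
  qed
  then have "{..k} \<subseteq> {i. i < length ?L \<and> t < ?L ! i}" using assms(1) by auto
  then have "card {..k} \<le> length (filter (\<lambda>x. t < x) ?L)"
    unfolding length_filter_conv_card by (intro card_mono) auto
  also have "\<dots> = length (filter (\<lambda>x. t < x) xs)"
    by (simp add: rev_filter[symmetric] filter_sort)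
  finally show False using assms(2) by simp
qed

lemma nontrivial_character_eq_if_Re_char_eigenvalue_gt_third:
  fixes \<chi> \<psi> :: "'a::{ab_group_add,finite} \<Rightarrow> complex"
  assumes "character \<chi>" "character \<psi>" "\<chi> \<noteq> (\<lambda>_. 1)" "\<psi> \<noteq> (\<lambda>_. 1)"
    and "CARD('a) / 3 < Re (char_eigenvalue S \<chi>)" "CARD('a) / 3 < Re (char_eigenvalue S \<psi>)"
  shows "\<chi> = \<psi>"
proof (rule ccontr)
  assume "\<chi> \<noteq> \<psi>"
  have "\<forall>g. \<chi> g ^ 2 = 1" "\<forall>g. \<psi> g ^ 2 = 1"
    using Re_char_eigenvalue_le_third[of _ S] assms(1,2,5,6) by (fastforce simp: fun_eq_iff)+
  then have "Re (char_eigenvalue S \<chi>) + Re (char_eigenvalue S \<psi>) \<le> CARD('a) / 2"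
    using Re_char_eigenvalue_add_le_half assms(1-4) \<open>\<chi> \<noteq> \<psi>\<close> by blast
  with assms(5,6) show False by simp
qed

theorem theorem3p5:
  fixes S :: "('a::{ab_group_add,finite}) set"
  assumes "CARD('a) \<ge> 3"
    and "0 \<notin> S"
    and "uminus ` S = S"
  shows "kth_largest_eig 3 (cayley_adj S) / real CARD('a) \<le> 1 / 3"
proof -
  obtain chs :: "('a \<Rightarrow> complex) list"
    where chs: "distinct chs" "length chs = CARD('a)" "\<forall>\<chi>\<in>set chs. character \<chi>"
    by (rule ex_distinct_characters)
  note eig = eig_mset_cayley_adj[OF chs assms(3)]
  let ?ev = "\<lambda>\<chi>. Re (char_eigenvalue S \<chi>)" and ?t = "CARD('a) / 3 :: real"
  let ?big = "{\<chi>\<in>set chs. ?t < ?ev \<chi>}"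
  have "card (?big - {\<lambda>_. 1}) \<le> Suc 0"
    using chs(3) by (subst card_le_Suc0_iff_eq)
      (auto intro: nontrivial_character_eq_if_Re_char_eigenvalue_gt_third)
  then have "card ?big \<le> 2" by (simp add: card_Diff_singleton_if split: if_splits)
  then have "length (filter (\<lambda>x. ?t < x) (map ?ev chs)) \<le> 2"
    using distinct_card[OF distinct_filter[OF chs(1)], of "\<lambda>\<chi>. ?t < ?ev \<chi>"]
    by (simp add: filter_map comp_def)
  then have "rev (sort (map ?ev chs)) ! 2 \<le> ?t"
    using assms(1) chs(2) by (intro nth_rev_sort_le) auto
  then show ?thesis
    unfolding kth_largest_eig_def eig sorted_list_of_multiset_mset by (simp add: divide_le_eq)
qed

end
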